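(* $t(K(7,3))=\frac{4}{3}$. Moreover, if $S$ is a vertex cut of $K(7,3)$ such that $\frac{|S|}{c(K(7,3)\setminus S)} = \frac{4}{3}$, then $S$ is the complement of a maximum independent set of $K(7,3)$.
   Context: The Kneser graph $K(n,k)$ has as vertices the $k$-element subsets of $[n]=\{1,\dots,n\}$, two vertices being adjacent iff they are disjoint. A vertex cut is a set $S$ of vertices whose removal disconnects the graph; $c(G\setminus S)$ is the number of connected components after deleting $S$; the toughness is $t(G)=\min_S |S|/c(G\setminus S)$ over vertex cuts $S$. *)

theory Defs
  imports Main "HOL.Real"
begin

definition kneser_vertices :: "nat \<Rightarrow> nat \<Rightarrow> nat set set" where
  "kneser_vertices n k = {A. A \<subseteq> {1..n} \<and> card A = k}"

definition kneser_adj :: "nat set \<Rightarrow> nat set \<Rightarrow> bool" where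
  "kneser_adj A B \<longleftrightarrow> A \<inter> B = {}"

definition induced_edges :: "('a \<Rightarrow> 'a \<Rightarrow> bool) \<Rightarrow> 'a set \<Rightarrow> ('a \<times> 'a) set" where
  "induced_edges E W = {(a, b). a \<in> W \<and> b \<in> W \<and> E a b}"

definition components :: "('a \<Rightarrow> 'a \<Rightarrow> bool) \<Rightarrow> 'a set \<Rightarrow> 'a set set" where
  "components E W = (\<lambda>x. {y \<in> W. (x, y) \<in> (induced_edges E W)\<^sup>*}) ` W"

definition num_components :: "('a \<Rightarrow> 'a \<Rightarrow> bool) \<Rightarrow> 'a set \<Rightarrow> nat" where
  "num_components E W = card (components E W)"

definition vertex_cut :: "'a set \<Rightarrow> ('a \<Rightarrow> 'a \<Rightarrow> bool) \<Rightarrow> 'a set \<Rightarrow> bool" where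
  "vertex_cut V E S \<longleftrightarrow> S \<subseteq> V \<and> num_components E (V - S) \<ge> 2"

definition toughness :: "'a set \<Rightarrow> ('a \<Rightarrow> 'a \<Rightarrow> bool) \<Rightarrow> real" where
  "toughness V E = Inf {real (card S) / real (num_components E (V - S)) | S. vertex_cut V E S}"

definition independent_set :: "'a set \<Rightarrow> ('a \<Rightarrow> 'a \<Rightarrow> bool) \<Rightarrow> 'a set \<Rightarrow> bool" where
  "independent_set V E I \<longleftrightarrow> I \<subseteq> V \<and> (\<forall>a\<in>I. \<forall>b\<in>I. \<not> E a b)"

definition maximum_independent_set :: "'a set \<Rightarrow> ('a \<Rightarrow> 'a \<Rightarrow> bool) \<Rightarrow> 'a set \<Rightarrow> bool" where
  "maximum_independent_set V E I \<longleftrightarrow> independent_set V E I \<and>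
     (\<forall>J. independent_set V E J \<longrightarrow> card J \<le> card I)"

end

theory Submission
  imports Defs
begin

(* The proof is spectral. K(7,3) is 4-regular on 35 vertices with eigenvalues 4, 2, -1, -3, so
   A + 3I and 2I + (2/35)J - A are positive semidefinite (A the adjacency matrix, J the all-ones
   matrix). Given a cut S, give all vertices of a component C of K(7,3) - S the same weight
   a_C and evaluate the form of A + 3I at the vector that is a_C on C and -1 on S: this gives
   the sum over the components of e_C (a_C + 1)^2 - 7 |C| a_C^2 <= 7 |S|, where e_C counts the
   edges from C to S. For the best a_C the summand is 7 n e / (7 n - e) with n = |C|, e = e_C,
   and this is at least 28/3, with equality only for isolated vertices: small components are
   handled by counting (K(7,3) has no triangles), larger ones by the bound on the edges inside C
   coming from the second eigenvalue 2, together with |C| <= 30. Hence 4 c <= 3 |S|, and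
   equality forces K(7,3) - S to be an independent set of size 15; the 15 triples through a
   fixed point attain it. *)

section \<open>Components and degrees\<close>

definition component :: "('a \<Rightarrow> 'a \<Rightarrow> bool) \<Rightarrow> 'a set \<Rightarrow> 'a \<Rightarrow> 'a set" where
  "component E W x = {y \<in> W. (x, y) \<in> (induced_edges E W)\<^sup>*}"

definition degree_in :: "'a set \<Rightarrow> ('a \<Rightarrow> 'a \<Rightarrow> bool) \<Rightarrow> 'a \<Rightarrow> nat" where
  "degree_in W E u = card {v \<in> W. E u v}"

lemma components_eq_image: "components E W = component E W ` W"
  by (simp add: components_def component_def)

lemma component_subset: "component E W x \<subseteq> W"
  by (auto simp: component_def)

lemma component_self: "x \<in> W \<Longrightarrow> x \<in> component E W x"
  by (simp add: component_def)

lemma components_subset: "C \<in> components E W \<Longrightarrow> C \<subseteq> W"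
  by (auto simp: components_eq_image component_def)

lemma components_nonempty: "C \<in> components E W \<Longrightarrow> C \<noteq> {}"
  by (auto simp: components_eq_image component_def)

lemma component_closed:
  assumes "u \<in> component E W x" "v \<in> W" "E u v"
  shows "v \<in> component E W x"
proof -
  have "(x, u) \<in> (induced_edges E W)\<^sup>*" "u \<in> W"
    using assms(1) by (auto simp: component_def)
  moreover have "(u, v) \<in> induced_edges E W"
    using assms(2,3) \<open>u \<in> W\<close> by (simp add: induced_edges_def)
  ultimately show ?thesis
    using assms(2) by (auto simp: component_def intro: rtrancl_into_rtrancl)
qed

lemma component_eq:
  assumes "symp E" "y \<in> component E W x"
  shows "component E W y = component E W x"
proof -
  have "sym (induced_edges E W)"
    using assms(1) by (auto simp: sym_def induced_edges_def dest: sympD)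
  hence sym: "sym ((induced_edges E W)\<^sup>*)" by (rule sym_rtrancl)
  have "(x, y) \<in> (induced_edges E W)\<^sup>*" using assms(2) by (simp add: component_def)
  moreover from this have "(y, x) \<in> (induced_edges E W)\<^sup>*" by (rule symD[OF sym])
  ultimately show ?thesis
    unfolding component_def by (auto intro: rtrancl_trans[of y x] rtrancl_trans[of x y])
qed

lemma components_disjoint:
  assumes "symp E" "C \<in> components E W" "C' \<in> components E W" "C \<inter> C' \<noteq> {}"
  shows "C = C'"
proof -
  obtain x x' where C: "C = component E W x" and C': "C' = component E W x'"
    using assms(2,3) by (auto simp: components_eq_image)
  obtain y where "y \<in> C" "y \<in> C'" using assms(4) by blast
  thus ?thesis using component_eq[OF assms(1)] C C' by metis
qed

lemma sum_over_components:
  assumes "symp E" "finite W"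
  shows "(\<Sum>u\<in>W. h u) = (\<Sum>C\<in>components E W. \<Sum>u\<in>C. h u)"
proof -
  have cover: "\<Union>(components E W) = W"
    by (auto simp: components_eq_image component_def)
  have fin: "\<forall>C\<in>components E W. finite C"
    unfolding components_eq_image using rev_finite_subset[OF assms(2) component_subset] by blast
  have disj: "\<forall>C\<in>components E W. \<forall>C'\<in>components E W. C \<noteq> C' \<longrightarrow> C \<inter> C' = {}"
    using components_disjoint[OF assms(1)] by blast
  show ?thesis
    using sum.Union_disjoint[OF fin disj, of h] unfolding cover comp_apply .
qed

lemma degree_in_component:
  assumes "u \<in> component E W x"
  shows "degree_in W E u = degree_in (component E W x) E u"
proof -
  have "{v \<in> W. E u v} = {v \<in> component E W x. E u v}"
    using component_closed[OF assms] component_subset[of E W x] by auto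
  thus ?thesis by (simp add: degree_in_def)
qed

lemma component_avoids_neighbours:
  assumes "symp E" "y \<in> W" "y \<notin> component E W x" "E y v"
  shows "v \<notin> component E W x"
proof
  assume "v \<in> component E W x"
  hence "y \<in> component E W x"
    using assms(2) sympD[OF assms(1,4)] by (rule component_closed)
  thus False using assms(3) by contradiction
qed

lemma num_components_independent:
  assumes "\<forall>a\<in>W. \<forall>b\<in>W. \<not> E a b"
  shows "num_components E W = card W"
proof -
  have "induced_edges E W = {}" using assms by (auto simp: induced_edges_def)
  hence "component E W x = {x}" if "x \<in> W" for x using that by (auto simp: component_def)
  hence "components E W = (\<lambda>x. {x}) ` W" by (simp add: components_eq_image)
  thus ?thesis by (simp add: num_components_def card_image)
qed

lemma component_card_le_regular:
  assumes V: "finite V" and E: "symp E" and irrefl: "\<forall>u\<in>V. \<not> E u u"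
    and reg: "\<forall>u\<in>V. degree_in V E u = k" and W: "W \<subseteq> V"
    and c2: "2 \<le> num_components E W" and C: "C \<in> components E W"
  shows "card C + k + 1 \<le> card V"
proof -
  obtain x where x: "x \<in> W" and C_eq: "C = component E W x"
    using C by (auto simp: components_eq_image)
  obtain y where y: "y \<in> W" "y \<notin> C"
  proof (rule ccontr)
    assume "\<not> thesis"
    with that have "W \<subseteq> C" by blast
    hence "component E W z = C" if "z \<in> W" for z
      using that component_eq[OF E, of z W x] C_eq by blast
    hence "components E W = {C}" using x by (auto simp: components_eq_image)
    thus False using c2 by (simp add: num_components_def)
  qed
  let ?N = "insert y {v \<in> V. E y v}"
  have yV: "y \<in> V" using y(1) W by blast
  have "v \<notin> C" if "E y v" for v
    using component_avoids_neighbours[OF E y(1) _ that] y(2) C_eq by simp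
  hence "C \<subseteq> V - ?N" using components_subset[OF C] W y(2) by blast
  hence "card C \<le> card (V - ?N)" using V by (simp add: card_mono)
  also have "\<dots> = card V - card ?N" using yV V by (intro card_Diff_subset) auto
  finally have "card C + card ?N \<le> card V" using card_mono[OF V, of ?N] yV by simp
  moreover have "card ?N = k + 1" using yV V reg irrefl by (simp add: degree_in_def)
  ultimately show ?thesis by simp
qed

lemma degree_in_le:
  assumes "finite C" "u \<in> C" "\<not> E u u"
  shows "degree_in C E u \<le> card C - 1"
proof -
  have "{v \<in> C. E u v} \<subseteq> C - {u}" using assms(3) by auto
  hence "degree_in C E u \<le> card (C - {u})"
    unfolding degree_in_def using assms(1) by (simp add: card_mono)
  thus ?thesis using assms(2) by simp
qed

lemma degree_sum_le:
  assumes "finite C" "\<forall>u\<in>C. \<not> E u u"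
  shows "(\<Sum>u\<in>C. degree_in C E u) \<le> card C * (card C - 1)"
proof -
  have "(\<Sum>u\<in>C. degree_in C E u) \<le> (\<Sum>u\<in>C. card C - 1)"
    using degree_in_le[OF assms(1)] assms(2) by (meson sum_mono)
  thus ?thesis by simp
qed

lemma degree_sum_eq_max_imp_clique:
  assumes "finite C" "\<forall>u\<in>C. \<not> E u u" "(\<Sum>u\<in>C. degree_in C E u) = card C * (card C - 1)"
    and "u \<in> C" "v \<in> C" "u \<noteq> v"
  shows "E u v"
proof -
  have max: "degree_in C E w \<le> card C - 1" if "w \<in> C" for w
    using degree_in_le[OF assms(1) that] assms(2) that by simp
  have "degree_in C E u = card C - 1"
  proof (rule ccontr)
    assume "degree_in C E u \<noteq> card C - 1"
    hence "degree_in C E u < card C - 1" using max[OF assms(4)] by simp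
    hence "(\<Sum>w\<in>C. degree_in C E w) < (\<Sum>w\<in>C. card C - 1)"
      using max assms(1,4) by (intro sum_strict_mono_ex1) auto
    thus False using assms(3) by simp
  qed
  moreover have "{w \<in> C. E u w} \<subseteq> C - {u}" using assms(2,4) by auto
  ultimately have "{w \<in> C. E u w} = C - {u}"
    using assms(1,4) by (intro card_subset_eq) (simp_all add: degree_in_def)
  thus ?thesis using assms(5,6) by blast
qed

section \<open>Quadratic forms of regular graphs\<close>

definition adjacency_form :: "'a set \<Rightarrow> ('a \<Rightarrow> 'a \<Rightarrow> bool) \<Rightarrow> ('a \<Rightarrow> real) \<Rightarrow> real" where
  "adjacency_form V E f = (\<Sum>u\<in>V. \<Sum>v\<in>V. if E u v then f u * f v else 0)"

lemma sum_if_adjacent: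
  fixes c :: real
  assumes "finite V"
  shows "(\<Sum>v\<in>V. if E u v then c else 0) = c * degree_in V E u"
  using assms by (simp add: sum.If_cases degree_in_def Int_def conj_commute)

lemma adjacency_form_shift:
  assumes V: "finite V" and E: "symp E" and reg: "\<forall>u\<in>V. degree_in V E u = k"
  shows "adjacency_form V E (\<lambda>u. g u - 1)
    = adjacency_form V E g - 2 * real k * (\<Sum>u\<in>V. g u) + real k * real (card V)"
proof -
  have row: "(\<Sum>u\<in>V. \<Sum>v\<in>V. if E u v then g u else 0) = k * (\<Sum>u\<in>V. g u)"
    using reg by (simp add: sum_if_adjacent[OF V] sum_distrib_left mult.commute)
  have col: "(\<Sum>u\<in>V. \<Sum>v\<in>V. if E u v then g v else 0) = k * (\<Sum>u\<in>V. g u)"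
  proof -
    have "(\<Sum>u\<in>V. \<Sum>v\<in>V. if E u v then g v else 0) = (\<Sum>v\<in>V. \<Sum>u\<in>V. if E v u then g v else 0)"
      using E by (subst sum.swap) (auto intro!: sum.cong dest: sympD)
    thus ?thesis using row by simp
  qed
  have ones: "(\<Sum>u\<in>V. \<Sum>v\<in>V. if E u v then 1 else 0) = real k * card V"
    using reg by (simp add: sum_if_adjacent[OF V])
  have "adjacency_form V E (\<lambda>u. g u - 1)
      = (\<Sum>u\<in>V. \<Sum>v\<in>V. (if E u v then g u * g v else 0) - (if E u v then g u else 0)
           - (if E u v then g v else 0) + (if E u v then 1 else 0))"
    unfolding adjacency_form_def by (intro sum.cong refl) (simp add: algebra_simps)
  also have "\<dots> = adjacency_form V E g - 2 * real k * (\<Sum>u\<in>V. g u) + real k * real (card V)"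
    unfolding adjacency_form_def sum.distrib sum_subtractf row col ones by simp
  finally show ?thesis .
qed

lemma adjacency_form_supported:
  assumes "finite V" "T \<subseteq> V" "\<forall>u\<in>V - T. g u = 0"
  shows "adjacency_form V E g = (\<Sum>u\<in>T. \<Sum>v\<in>T. if E u v then g u * g v else 0)"
proof -
  have "adjacency_form V E g = (\<Sum>u\<in>T. \<Sum>v\<in>V. if E u v then g u * g v else 0)"
    unfolding adjacency_form_def using assms by (intro sum.mono_neutral_right) (auto intro!: sum.neutral)
  also have "\<dots> = (\<Sum>u\<in>T. \<Sum>v\<in>T. if E u v then g u * g v else 0)"
    using assms by (intro sum.cong refl sum.mono_neutral_right) auto
  finally show ?thesis .
qed

lemma adjacency_form_indicator:
  assumes "finite V" "C \<subseteq> V"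
  shows "adjacency_form V E (\<lambda>u. of_bool (u \<in> C)) = (\<Sum>u\<in>C. real (degree_in C E u))"
proof -
  have "adjacency_form V E (\<lambda>u. of_bool (u \<in> C)) = (\<Sum>u\<in>C. \<Sum>v\<in>C. if E u v then 1 else 0)"
    using assms by (subst adjacency_form_supported[of V C]) (auto intro!: sum.cong)
  also have "\<dots> = (\<Sum>u\<in>C. real (degree_in C E u))"
    using finite_subset[OF assms(2,1)] by (simp add: sum_if_adjacent)
  finally show ?thesis .
qed

lemma cut_weight_bound:
  fixes a :: "'a \<Rightarrow> real" and \<theta> :: real
  assumes V: "finite V" and E: "symp E" and reg: "\<forall>u\<in>V. degree_in V E u = k"
    and least: "\<And>f. 0 \<le> adjacency_form V E f + \<theta> * (\<Sum>u\<in>V. (f u)\<^sup>2)"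
    and S: "S \<subseteq> V"
    and const: "\<And>u v. u \<in> V - S \<Longrightarrow> v \<in> V - S \<Longrightarrow> E u v \<Longrightarrow> a u = a v"
  shows "(\<Sum>u\<in>V - S. (real k - degree_in (V - S) E u) * (a u + 1)\<^sup>2 - (k + \<theta>) * (a u)\<^sup>2)
    \<le> (k + \<theta>) * card S"
proof -
  define T where "T = V - S"
  define g where "g u = (if u \<in> T then a u + 1 else 0)" for u
  define d where "d u = real (degree_in T E u)" for u
  have T: "finite T" "T \<subseteq> V" using V by (auto simp: T_def)
  have card_V: "real (card V) = card T + card S"
    using S V by (simp add: T_def card_Diff_subset finite_subset of_nat_diff card_mono)
  have sum_g: "(\<Sum>u\<in>V. g u) = (\<Sum>u\<in>T. a u + 1)"
    using V T by (intro sum.mono_neutral_cong_right) (auto simp: g_def)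
  have sum_g2: "(\<Sum>u\<in>V. (g u)\<^sup>2) = (\<Sum>u\<in>T. (a u + 1)\<^sup>2)"
    using V T by (intro sum.mono_neutral_cong_right) (auto simp: g_def)
  have form_g: "adjacency_form V E g = (\<Sum>u\<in>T. (a u + 1)\<^sup>2 * d u)"
  proof -
    have "adjacency_form V E g = (\<Sum>u\<in>T. \<Sum>v\<in>T. if E u v then (a u + 1)\<^sup>2 else 0)"
      using V T const by (subst adjacency_form_supported[of V T])
        (auto simp: g_def T_def power2_eq_square intro!: sum.cong)
    thus ?thesis using T by (simp add: sum_if_adjacent d_def)
  qed
  have "0 \<le> adjacency_form V E (\<lambda>u. g u - 1) + \<theta> * (\<Sum>u\<in>V. (g u - 1)\<^sup>2)"
    by (rule least)
  also have "(\<Sum>u\<in>V. (g u - 1)\<^sup>2) = (\<Sum>u\<in>V. (g u)\<^sup>2) - 2 * (\<Sum>u\<in>V. g u) + card V"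
    by (simp add: power2_diff sum_subtractf sum.distrib sum_distrib_left)
  finally have "0 \<le> (\<Sum>u\<in>T. (a u + 1)\<^sup>2 * d u) + \<theta> * (\<Sum>u\<in>T. (a u + 1)\<^sup>2)
      - 2 * (k + \<theta>) * (\<Sum>u\<in>T. a u + 1) + (k + \<theta>) * (card T + card S)"
    unfolding adjacency_form_shift[OF V E reg] form_g sum_g sum_g2 card_V
    by (simp add: algebra_simps)
  moreover have "(\<Sum>u\<in>T. (real k - d u) * (a u + 1)\<^sup>2 - (k + \<theta>) * (a u)\<^sup>2)
      = 2 * (k + \<theta>) * (\<Sum>u\<in>T. a u + 1) - (\<Sum>u\<in>T. (a u + 1)\<^sup>2 * d u)
        - \<theta> * (\<Sum>u\<in>T. (a u + 1)\<^sup>2) - (k + \<theta>) * card T"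
  proof -
    have "(\<Sum>u\<in>T. (real k - d u) * (a u + 1)\<^sup>2 - (k + \<theta>) * (a u)\<^sup>2)
        = (\<Sum>u\<in>T. 2 * (k + \<theta>) * (a u + 1) - (a u + 1)\<^sup>2 * d u
             - \<theta> * (a u + 1)\<^sup>2 - (k + \<theta>))"
      by (intro sum.cong refl) (simp add: power2_eq_square algebra_simps)
    thus ?thesis by (simp add: sum_subtractf sum_distrib_left)
  qed
  ultimately show ?thesis unfolding T_def d_def by (simp add: algebra_simps)
qed

lemma sum_component_constant_weight:
  fixes \<alpha> :: "'a set \<Rightarrow> real" and c :: real
  assumes E: "symp E" and C: "C \<in> components E T"
  shows "(\<Sum>u\<in>C. (real k - degree_in T E u) * (\<alpha> (component E T u) + 1)\<^sup>2
          - c * (\<alpha> (component E T u))\<^sup>2)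
    = (real k * card C - (\<Sum>u\<in>C. real (degree_in C E u))) * (\<alpha> C + 1)\<^sup>2 - c * card C * (\<alpha> C)\<^sup>2"
proof -
  obtain x where x: "C = component E T x" using C by (auto simp: components_eq_image)
  have "component E T u = C" "degree_in T E u = degree_in C E u" if "u \<in> C" for u
    using component_eq[OF E, of u T x] degree_in_component[of u E T x] that x by simp_all
  hence "(\<Sum>u\<in>C. (real k - degree_in T E u) * (\<alpha> (component E T u) + 1)\<^sup>2
          - c * (\<alpha> (component E T u))\<^sup>2)
      = (\<Sum>u\<in>C. (real k - degree_in C E u) * (\<alpha> C + 1)\<^sup>2 - c * (\<alpha> C)\<^sup>2)"
    by (intro sum.cong) simp_all
  thus ?thesis by (simp add: sum_subtractf sum_distrib_right[symmetric])
qed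

lemma optimal_weight_value:
  fixes e m :: real
  assumes "e \<noteq> m"
  shows "e * (e / (m - e) + 1)\<^sup>2 - m * (e / (m - e))\<^sup>2 = m * e / (m - e)"
proof -
  define s where "s = m - e"
  have "s \<noteq> 0" "m = e + s" using assms by (auto simp: s_def)
  thus ?thesis by (simp add: field_simps power2_eq_square)
qed

section \<open>Kneser graphs\<close>

lemma finite_kneser_vertices: "finite (kneser_vertices n k)"
  unfolding kneser_vertices_def by (rule finite_subset[of _ "Pow {1..n}"]) auto

lemma card_kneser_vertices: "card (kneser_vertices n k) = n choose k"
  unfolding kneser_vertices_def using n_subsets[of "{1..n}" k] by simp

lemma symp_kneser_adj: "symp kneser_adj"
  by (auto simp: symp_def kneser_adj_def)

lemma not_kneser_adj_self:
  assumes "A \<in> kneser_vertices n k" "0 < k"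
  shows "\<not> kneser_adj A A"
  using assms by (auto simp: kneser_vertices_def kneser_adj_def)

lemma degree_kneser:
  assumes "A \<in> kneser_vertices n k"
  shows "degree_in (kneser_vertices n k) kneser_adj A = (n - k) choose k"
proof -
  have A: "A \<subseteq> {1..n}" "card A = k" using assms by (auto simp: kneser_vertices_def)
  have "{B \<in> kneser_vertices n k. kneser_adj A B} = {B. B \<subseteq> {1..n} - A \<and> card B = k}"
    by (auto simp: kneser_vertices_def kneser_adj_def)
  moreover have "card ({1..n} - A) = n - k"
    using A by (simp add: card_Diff_subset finite_subset)
  ultimately show ?thesis
    unfolding degree_in_def using n_subsets[of "{1..n} - A" k] by simp
qed

lemma kneser_clique_card:
  assumes Q: "Q \<subseteq> kneser_vertices n k"
    and clique: "\<And>A B. A \<in> Q \<Longrightarrow> B \<in> Q \<Longrightarrow> A \<noteq> B \<Longrightarrow> kneser_adj A B"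
  shows "card Q * k \<le> n"
proof -
  have fin: "finite A" "card A = k" "A \<subseteq> {1..n}" if "A \<in> Q" for A
    using that Q by (auto simp: kneser_vertices_def finite_subset)
  have "card (\<Union>Q) = (\<Sum>A\<in>Q. card A)"
    using clique fin(1) by (intro card_Union_disjoint) (auto simp: pairwise_def disjnt_def kneser_adj_def)
  also have "\<dots> = card Q * k" using fin(2) by simp
  finally have "card (\<Union>Q) = card Q * k" .
  moreover have "card (\<Union>Q) \<le> card {1..n}" using fin(3) by (intro card_mono) auto
  ultimately show ?thesis by simp
qed

section \<open>The Kneser graph K(7,3)\<close>

abbreviation K73 :: "nat set set" where
  "K73 \<equiv> kneser_vertices 7 3"

lemma degree_K73: "\<forall>A\<in>K73. degree_in K73 kneser_adj A = 4"
  using degree_kneser[of _ 7 3] by (simp add: numeral_eq_Suc)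

lemma card_K73: "card K73 = 35"
  by (simp add: card_kneser_vertices numeral_eq_Suc)

lemma not_kneser_adj_self_K73: "\<forall>A\<in>K73. \<not> kneser_adj A A"
  using not_kneser_adj_self[of _ 7 3] by auto

definition K73_list :: "nat set list" where
  "K73_list = [{1,2,3}, {1,2,4}, {1,2,5}, {1,2,6}, {1,2,7}, {1,3,4}, {1,3,5}, {1,3,6}, {1,3,7},
    {1,4,5}, {1,4,6}, {1,4,7}, {1,5,6}, {1,5,7}, {1,6,7}, {2,3,4}, {2,3,5}, {2,3,6}, {2,3,7},
    {2,4,5}, {2,4,6}, {2,4,7}, {2,5,6}, {2,5,7}, {2,6,7}, {3,4,5}, {3,4,6}, {3,4,7}, {3,5,6},
    {3,5,7}, {3,6,7}, {4,5,6}, {4,5,7}, {4,6,7}, {5,6,7}]"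

lemma distinct_K73_list: "distinct K73_list"
proof -
  have "distinct (map (\<lambda>A. \<Sum>x\<in>A. (2::nat) ^ x) K73_list)" by (simp add: K73_list_def)
  thus ?thesis by (simp add: distinct_map)
qed

lemma K73_eq_set: "K73 = set K73_list"
proof (rule card_subset_eq[symmetric])
  show "finite K73" by (rule finite_kneser_vertices)
  show "set K73_list \<subseteq> K73" by (simp add: K73_list_def kneser_vertices_def)
  show "card (set K73_list) = card K73"
    using distinct_card[OF distinct_K73_list] by (simp add: card_K73 K73_list_def)
qed

lemma sum_K73: "(\<Sum>u\<in>K73. g u) = sum_list (map g K73_list)"
  by (simp add: K73_eq_set sum.distinct_set_conv_list[OF distinct_K73_list])

(* Sum-of-squares certificates from the Johnson scheme J(7,3). Let A_i be the matrix of
   "meeting in exactly i points" (so A = A_0) and E_0, ..., E_3 the primitive idempotents, on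
   which A acts as 4, -3, 2, -1. Then A^2 = 4I + A_2 and 70 (A + 3I) = 10 (A + 3I)^2 +
   (8I + A - A_2)^2. For the second bound, 2I + (2/35)J - A = 5 E_1 + 3 E_3, where 490 E_1 is
   the Gram matrix of the vectors u |-> 7 [z : u] - 3 (z a point) and 30 E_3 = 15I + 5 A_1 - 3J. *)
lemma K73_least_eigenvalue: "0 \<le> adjacency_form K73 kneser_adj f + 3 * (\<Sum>u\<in>K73. (f u)\<^sup>2)"
proof -
  define Af where "Af w = (\<Sum>v\<in>K73. if kneser_adj w v then f v else 0)" for w
  define A2f where "A2f w = (\<Sum>v\<in>K73. if card (w \<inter> v) = 2 then f v else 0)" for w
  have "70 * (adjacency_form K73 kneser_adj f + 3 * (\<Sum>u\<in>K73. (f u)\<^sup>2))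
      = 10 * (\<Sum>w\<in>K73. (3 * f w + Af w)\<^sup>2) + (\<Sum>w\<in>K73. (8 * f w + Af w - A2f w)\<^sup>2)"
    unfolding adjacency_form_def Af_def A2f_def sum_K73
    by (simp add: K73_list_def kneser_adj_def) algebra
  moreover have "0 \<le> 10 * (\<Sum>w\<in>K73. (3 * f w + Af w)\<^sup>2) + (\<Sum>w\<in>K73. (8 * f w + Af w - A2f w)\<^sup>2)"
    by (intro add_nonneg_nonneg mult_nonneg_nonneg sum_nonneg) auto
  ultimately show ?thesis by (simp add: zero_le_mult_iff)
qed

lemma K73_second_eigenvalue:
  "adjacency_form K73 kneser_adj f \<le> 2 * (\<Sum>u\<in>K73. (f u)\<^sup>2) + 2 / 35 * (\<Sum>u\<in>K73. f u)\<^sup>2"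
proof -
  define \<Sigma> where "\<Sigma> = (\<Sum>u\<in>K73. f u)"
  define Nf where "Nf z = (\<Sum>u\<in>K73. if z \<in> u then f u else 0)" for z :: nat
  define A1f where "A1f w = (\<Sum>v\<in>K73. if card (w \<inter> v) = 1 then f v else 0)" for w
  have points: "{1..7::nat} = {1, 2, 3, 4, 5, 6, 7}" by auto
  have "14700 * (2 * (\<Sum>u\<in>K73. (f u)\<^sup>2) + 2 / 35 * \<Sigma>\<^sup>2 - adjacency_form K73 kneser_adj f)
      = 150 * (\<Sum>z\<in>{1..7}. (7 * Nf z - 3 * \<Sigma>)\<^sup>2) + 49 * (\<Sum>w\<in>K73. (3 * \<Sigma> - 15 * f w - 5 * A1f w)\<^sup>2)"
    unfolding adjacency_form_def \<Sigma>_def Nf_def A1f_def sum_K73 points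
    by (simp add: K73_list_def kneser_adj_def) algebra
  moreover have "0 \<le> 150 * (\<Sum>z\<in>{1..7}. (7 * Nf z - 3 * \<Sigma>)\<^sup>2)
      + 49 * (\<Sum>w\<in>K73. (3 * \<Sigma> - 15 * f w - 5 * A1f w)\<^sup>2)"
    by (intro add_nonneg_nonneg mult_nonneg_nonneg sum_nonneg) auto
  ultimately show ?thesis unfolding \<Sigma>_def by (simp add: zero_le_mult_iff)
qed

lemma degree_sum_arith:
  fixes n D :: nat
  assumes "2 \<le> n" "n \<le> 30" "D \<le> n * (n - 1)" "D = n * (n - 1) \<Longrightarrow> n \<le> 2"
    and iso: "35 * D \<le> 70 * n + 2 * n\<^sup>2"
  shows "D * (3 * n + 4) < 12 * n * (n - 1)"
proof -
  consider "n = 2" | "n = 3" | "n = 30" | "4 \<le> n" "n \<le> 29"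
    using assms(1,2) by linarith
  thus ?thesis
  proof cases
    case 1
    thus ?thesis using assms(3) by simp
  next
    case 2
    hence "D \<le> 5" using assms(3,4) by fastforce
    thus ?thesis using 2 by simp
  next
    case 3
    hence "D \<le> 111" using iso by (simp add: power2_eq_square)
    thus ?thesis using 3 by simp
  next
    case 4
    (* 420 n (n - 1) - (70 n + 2 n^2)(3 n + 4) = 2 n ((89 - 3 n)(n - 4) + 6) *)
    have "0 \<le> int n * ((89 - 3 * int n) * (int n - 4))" using 4 by simp
    hence "(70 * int n + 2 * (int n)\<^sup>2) * (3 * int n + 4) < 420 * int n * (int n - 1)"
      using 4 unfolding power2_eq_square by (simp add: algebra_simps)
    moreover have "35 * int D * (3 * int n + 4) \<le> (70 * int n + 2 * (int n)\<^sup>2) * (3 * int n + 4)"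
      using iso by (intro mult_right_mono) (simp_all add: of_nat_mono flip: of_nat_mult of_nat_power)
    ultimately have "int D * (3 * int n + 4) < 12 * int n * (int n - 1)" by linarith
    hence "int (D * (3 * n + 4)) < int (12 * n * (n - 1))" using 4 by (simp add: of_nat_diff)
    thus ?thesis by (simp only: of_nat_less_iff)
  qed
qed

lemma K73_component_degree_sum:
  assumes c2: "2 \<le> num_components kneser_adj (K73 - S)"
    and C: "C \<in> components kneser_adj (K73 - S)"
  defines "D \<equiv> \<Sum>u\<in>C. degree_in C kneser_adj u"
  shows "D * (3 * card C + 4) \<le> 12 * card C * (card C - 1)"
    and "2 \<le> card C \<Longrightarrow> D * (3 * card C + 4) < 12 * card C * (card C - 1)"
proof -
  have CV: "C \<subseteq> K73" using components_subset[OF C] by blast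
  have fin: "finite C" using finite_subset[OF CV finite_kneser_vertices] .
  have irrefl: "\<forall>u\<in>C. \<not> kneser_adj u u" using CV not_kneser_adj_self_K73 by blast
  have small: "card C \<le> 30"
    using component_card_le_regular[OF finite_kneser_vertices symp_kneser_adj
        not_kneser_adj_self_K73 degree_K73 Diff_subset c2 C]
    by (simp add: card_K73)
  have D_le: "D \<le> card C * (card C - 1)"
    unfolding D_def using fin irrefl by (rule degree_sum_le)
  have clique: "card C \<le> 2" if "D = card C * (card C - 1)"
  proof -
    have "kneser_adj A B" if "A \<in> C" "B \<in> C" "A \<noteq> B" for A B
      using degree_sum_eq_max_imp_clique[of C kneser_adj A B] fin irrefl that
        \<open>D = card C * (card C - 1)\<close>
      by (simp add: D_def)
    hence "card C * 3 \<le> 7" by (rule kneser_clique_card[OF CV])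
    thus ?thesis by simp
  qed
  have iso: "35 * D \<le> 70 * card C + 2 * (card C)\<^sup>2"
  proof -
    let ?f = "\<lambda>u. of_bool (u \<in> C) :: real"
    have "(\<Sum>u\<in>K73. ?f u) = card C"
      using finite_kneser_vertices CV by (simp add: Int_absorb1)
    moreover have "(\<Sum>u\<in>K73. (?f u)\<^sup>2) = (\<Sum>u\<in>K73. ?f u)"
      by (intro sum.cong) (auto simp: power2_eq_square)
    moreover have "adjacency_form K73 kneser_adj ?f = D"
      using adjacency_form_indicator[OF finite_kneser_vertices CV] by (simp add: D_def)
    ultimately have "real D \<le> 2 * card C + 2 / 35 * (card C)\<^sup>2"
      using K73_second_eigenvalue[of ?f] by simp
    hence "real (35 * D) \<le> real (70 * card C + 2 * (card C)\<^sup>2)" by simp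
    thus ?thesis by (simp only: of_nat_le_iff)
  qed
  show strict: "D * (3 * card C + 4) < 12 * card C * (card C - 1)" if "2 \<le> card C"
    using degree_sum_arith[OF that small D_le clique iso] .
  show "D * (3 * card C + 4) \<le> 12 * card C * (card C - 1)"
  proof (cases "2 \<le> card C")
    case True thus ?thesis using strict by simp
  next
    case False thus ?thesis using D_le by simp
  qed
qed

lemma component_value_threshold:
  fixes n D :: real
  assumes "0 < 3 * n + D"
  shows "28 / 3 \<le> 7 * n * (4 * n - D) / (3 * n + D) \<longleftrightarrow> D * (3 * n + 4) \<le> 12 * n * (n - 1)"
    and "28 / 3 < 7 * n * (4 * n - D) / (3 * n + D) \<longleftrightarrow> D * (3 * n + 4) < 12 * n * (n - 1)"
  using assms by (auto simp: field_simps)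

lemma K73_component_value:
  assumes c2: "2 \<le> num_components kneser_adj (K73 - S)"
    and C: "C \<in> components kneser_adj (K73 - S)"
  defines "n \<equiv> real (card C)" and "D \<equiv> real (\<Sum>u\<in>C. degree_in C kneser_adj u)"
  shows "0 < 3 * n + D"
    and "28 / 3 \<le> 7 * n * (4 * n - D) / (3 * n + D)"
    and "2 \<le> card C \<Longrightarrow> 28 / 3 < 7 * n * (4 * n - D) / (3 * n + D)"
proof -
  have "finite C"
    using components_subset[OF C] finite_kneser_vertices by (blast intro: finite_subset)
  hence "1 \<le> card C" using components_nonempty[OF C] by (simp add: Suc_le_eq card_gt_0_iff)
  note bound = K73_component_degree_sum[OF c2 C]
  show pos: "0 < 3 * n + D" using \<open>1 \<le> card C\<close> by (simp add: n_def D_def add_pos_nonneg sum_nonneg)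
  show "28 / 3 \<le> 7 * n * (4 * n - D) / (3 * n + D)"
    unfolding component_value_threshold(1)[OF pos]
    using bound(1)[THEN of_nat_mono[where ?'a = real]] \<open>1 \<le> card C\<close>
    by (simp add: n_def D_def of_nat_diff)
  show "28 / 3 < 7 * n * (4 * n - D) / (3 * n + D)" if "2 \<le> card C"
    unfolding component_value_threshold(2)[OF pos]
    using bound(2)[OF that, THEN of_nat_less_iff[where ?'a = real, THEN iffD2]] \<open>1 \<le> card C\<close>
    by (simp add: n_def D_def of_nat_diff)
qed

lemma K73_cut_components:
  assumes S: "S \<subseteq> K73" and c2: "2 \<le> num_components kneser_adj (K73 - S)"
  shows "4 * num_components kneser_adj (K73 - S) \<le> 3 * card S"
    and "\<lbrakk>u \<in> K73 - S; v \<in> K73 - S; kneser_adj u v\<rbrakk>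
      \<Longrightarrow> 4 * num_components kneser_adj (K73 - S) < 3 * card S"
proof -
  define T where "T = K73 - S"
  define CC where "CC = components kneser_adj T"
  define n where "n C = real (card C)" for C :: "nat set set"
  define D where "D C = real (\<Sum>u\<in>C. degree_in C kneser_adj u)" for C :: "nat set set"
  define val where "val C = 7 * n C * (4 * n C - D C) / (3 * n C + D C)" for C
  (* the maximiser of e (\<alpha> + 1)^2 - 7 n \<alpha>^2 for n = n C and e = 4 n - D C *)
  define \<alpha> where "\<alpha> C = (4 * n C - D C) / (3 * n C + D C)" for C
  define a where "a u = \<alpha> (component kneser_adj T u)" for u
  have finT: "finite T" using finite_kneser_vertices by (simp add: T_def)
  have CC_card: "num_components kneser_adj (K73 - S) = card CC"
    by (simp add: num_components_def CC_def T_def)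
  note bounds = K73_component_value[OF c2, folded T_def CC_def, folded n_def D_def]
  have "(\<Sum>u\<in>T. (real 4 - degree_in T kneser_adj u) * (a u + 1)\<^sup>2 - (real 4 + 3) * (a u)\<^sup>2)
      \<le> (real 4 + 3) * card S"
    unfolding T_def
  proof (rule cut_weight_bound[OF finite_kneser_vertices symp_kneser_adj degree_K73
        K73_least_eigenvalue S])
    fix u v assume "u \<in> K73 - S" "v \<in> K73 - S" "kneser_adj u v"
    hence "v \<in> component kneser_adj T u"
      unfolding T_def by (intro component_closed[OF component_self])
    thus "a u = a v" using component_eq[OF symp_kneser_adj] by (simp add: a_def)
  qed
  also have "(\<Sum>u\<in>T. (real 4 - degree_in T kneser_adj u) * (a u + 1)\<^sup>2 - (real 4 + 3) * (a u)\<^sup>2)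
      = (\<Sum>C\<in>CC. val C)"
    unfolding sum_over_components[OF symp_kneser_adj finT] CC_def[symmetric]
  proof (intro sum.cong refl)
    fix C assume C: "C \<in> CC"
    show "(\<Sum>u\<in>C. (real 4 - degree_in T kneser_adj u) * (a u + 1)\<^sup>2 - (real 4 + 3) * (a u)\<^sup>2)
        = val C"
      unfolding a_def sum_component_constant_weight[OF symp_kneser_adj C[unfolded CC_def]]
      using optimal_weight_value[of "4 * n C - D C" "7 * n C"] bounds(1)[OF C]
      by (simp add: n_def D_def \<alpha>_def val_def algebra_simps)
  qed
  finally have total: "(\<Sum>C\<in>CC. val C) \<le> 7 * card S" by simp
  have "card CC * (28 / 3) \<le> (\<Sum>C\<in>CC. val C)"
    using bounds(2) unfolding val_def by (rule sum_bounded_below)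
  with total show "4 * num_components kneser_adj (K73 - S) \<le> 3 * card S"
    using CC_card by simp
  assume uv: "u \<in> K73 - S" "v \<in> K73 - S" "kneser_adj u v"
  define C0 where "C0 = component kneser_adj T u"
  have C0: "C0 \<in> CC" using uv by (simp add: C0_def CC_def T_def components_eq_image)
  have "{u, v} \<subseteq> C0"
    using uv unfolding C0_def T_def
    by (auto intro: component_self component_closed[OF component_self])
  moreover have "u \<noteq> v" using uv not_kneser_adj_self_K73 by auto
  moreover have "finite C0"
    using finT components_subset[OF C0[unfolded CC_def]] by (rule finite_subset[rotated])
  ultimately have "2 \<le> card C0" using card_mono[of C0 "{u, v}"] by simp
  hence "(\<Sum>C\<in>CC. 28 / 3) < (\<Sum>C\<in>CC. val C)"
    using C0 finT bounds(2,3)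
    by (intro sum_strict_mono_ex1) (auto simp: CC_def components_eq_image val_def)
  with total show "4 * num_components kneser_adj (K73 - S) < 3 * card S"
    using CC_card by simp
qed

lemma K73_independent_card_le:
  assumes J: "independent_set K73 kneser_adj J"
  shows "card J \<le> 15"
proof (cases "card J \<le> 1")
  case False
  have JV: "J \<subseteq> K73" and indep: "\<forall>a\<in>J. \<forall>b\<in>J. \<not> kneser_adj a b"
    using J by (auto simp: independent_set_def)
  have rest: "K73 - (K73 - J) = J" using JV by blast
  have "num_components kneser_adj J = card J" by (rule num_components_independent[OF indep])
  hence "4 * card J \<le> 3 * card (K73 - J)"
    using K73_cut_components(1)[of "K73 - J"] False by (simp add: rest)
  moreover have "card (K73 - J) = 35 - card J"
    using JV finite_kneser_vertices by (simp add: card_Diff_subset finite_subset card_K73)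
  ultimately show ?thesis by simp
qed simp

lemma K73_star_cut:
  defines "S \<equiv> K73 - {A \<in> K73. 1 \<in> A}"
  shows "vertex_cut K73 kneser_adj S"
    and "real (card S) / real (num_components kneser_adj (K73 - S)) = 4 / 3"
proof -
  let ?I = "{A \<in> K73. 1 \<in> A}"
  have "card ?I = length (filter (\<lambda>A. 1 \<in> A) K73_list)"
    using distinct_card[OF distinct_filter[OF distinct_K73_list]] by (simp add: K73_eq_set)
  hence card_I: "card ?I = 15" by (simp add: K73_list_def)
  have indep: "\<forall>a\<in>?I. \<forall>b\<in>?I. \<not> kneser_adj a b" by (auto simp: kneser_adj_def)
  have rest: "K73 - S = ?I" unfolding S_def by blast
  have "num_components kneser_adj (K73 - S) = 15"
    unfolding rest num_components_independent[OF indep] by (rule card_I)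
  moreover have "card S = 20"
    using card_I finite_kneser_vertices by (simp add: S_def card_Diff_subset card_K73)
  ultimately show "vertex_cut K73 kneser_adj S"
    and "real (card S) / real (num_components kneser_adj (K73 - S)) = 4 / 3"
    by (simp_all add: vertex_cut_def S_def)
qed

lemma K73_toughness_bound:
  assumes "vertex_cut K73 kneser_adj S"
  shows "4 / 3 \<le> real (card S) / real (num_components kneser_adj (K73 - S))"
proof -
  have S: "S \<subseteq> K73" and c2: "2 \<le> num_components kneser_adj (K73 - S)"
    using assms by (auto simp: vertex_cut_def)
  have "real (4 * num_components kneser_adj (K73 - S)) \<le> real (3 * card S)"
    using K73_cut_components(1)[OF S c2] by (simp only: of_nat_le_iff)
  thus ?thesis using c2 by (simp add: field_simps)
qed

lemma K73_tight_cut: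
  assumes "vertex_cut K73 kneser_adj S"
    and "real (card S) / real (num_components kneser_adj (K73 - S)) = 4 / 3"
  shows "maximum_independent_set K73 kneser_adj (K73 - S)"
proof -
  have S: "S \<subseteq> K73" and c2: "2 \<le> num_components kneser_adj (K73 - S)"
    using assms(1) by (auto simp: vertex_cut_def)
  have "real (3 * card S) = real (4 * num_components kneser_adj (K73 - S))"
    using assms(2) c2 by (simp add: field_simps)
  hence eq: "3 * card S = 4 * num_components kneser_adj (K73 - S)" by (simp only: of_nat_eq_iff)
  have indep: "\<forall>a\<in>K73 - S. \<forall>b\<in>K73 - S. \<not> kneser_adj a b"
  proof (intro ballI notI)
    fix a b assume "a \<in> K73 - S" "b \<in> K73 - S" "kneser_adj a b"
    with eq show False using K73_cut_components(2)[OF S c2] by simp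
  qed
  have "card (K73 - S) = 35 - card S"
    using S finite_kneser_vertices by (simp add: card_Diff_subset finite_subset card_K73)
  hence "card (K73 - S) = 15" using eq num_components_independent[OF indep] by simp
  moreover have "independent_set K73 kneser_adj (K73 - S)"
    using indep by (simp add: independent_set_def)
  ultimately show ?thesis
    unfolding maximum_independent_set_def using K73_independent_card_le by simp
qed

theorem theorem4p3:
  shows "toughness (kneser_vertices 7 3) kneser_adj = 4 / 3 \<and>
    (\<forall>S. vertex_cut (kneser_vertices 7 3) kneser_adj S \<and>
         real (card S) / real (num_components kneser_adj (kneser_vertices 7 3 - S)) = 4 / 3
       \<longrightarrow> (\<exists>I. maximum_independent_set (kneser_vertices 7 3) kneser_adj I \<and>
                 S = kneser_vertices 7 3 - I))"
proof (intro conjI allI impI)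
  show "toughness K73 kneser_adj = 4 / 3"
    unfolding toughness_def
  proof (rule cInf_eq_minimum)
    show "4 / 3 \<in> {real (card S) / real (num_components kneser_adj (K73 - S)) |S.
        vertex_cut K73 kneser_adj S}"
      using K73_star_cut by (intro CollectI exI[where x = "K73 - {A \<in> K73. 1 \<in> A}"]) simp
    fix x assume "x \<in> {real (card S) / real (num_components kneser_adj (K73 - S)) |S.
        vertex_cut K73 kneser_adj S}"
    thus "4 / 3 \<le> x" using K73_toughness_bound by blast
  qed
  fix S assume tight: "vertex_cut K73 kneser_adj S \<and>
    real (card S) / real (num_components kneser_adj (K73 - S)) = 4 / 3"
  hence "S = K73 - (K73 - S)" by (auto simp: vertex_cut_def)
  with tight show "\<exists>I. maximum_independent_set K73 kneser_adj I \<and> S = K73 - I"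
    using K73_tight_cut by blast
qed

end
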